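(* Let $v$ and $v'$ be distinct false twin vertices of a graph $G$. Then $\tilde\gamma_{gr}^{\times 2}(G-v')\le\tilde\gamma_{gr}^{\times 2}(G)\le\tilde\gamma_{gr}^{\times 2}(G-v')+1$. Moreover, if $S$ is an MDNS of $G$ and $\tilde\gamma_{gr}^{\times 2}(G)=\tilde\gamma_{gr}^{\times 2}(G-v')+1$, then at least one of $v,v'$ belongs to $S$.
   Context: Graphs are finite, simple, undirected; $N(v)$ open and $N[v]$ closed neighborhood; $v,v'$ are false twins if $N(v)=N(v')$. A sequence $S=(v_1,\dots,v_k)$ of distinct vertices is a double neighborhood sequence (DNS) if for each $i$ some $u\in N[v_i]$ satisfies $|\{j<i: u\in N[v_j]\}|\le 1$. An MDNS is a DNS of maximum length; $\tilde\gamma_{gr}^{\times 2}(G)$ is that length. *)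

theory Defs
  imports Main
begin

definition simple_graph :: "'a set \<Rightarrow> ('a \<Rightarrow> 'a \<Rightarrow> bool) \<Rightarrow> bool" where
  "simple_graph V E \<longleftrightarrow> finite V \<and> (\<forall>x y. E x y \<longrightarrow> E y x)
     \<and> (\<forall>x. \<not> E x x) \<and> (\<forall>x y. E x y \<longrightarrow> x \<in> V \<and> y \<in> V)"

definition open_nbhd :: "'a set \<Rightarrow> ('a \<Rightarrow> 'a \<Rightarrow> bool) \<Rightarrow> 'a \<Rightarrow> 'a set" where
  "open_nbhd V E v = {u \<in> V. E v u}"

definition closed_nbhd :: "'a set \<Rightarrow> ('a \<Rightarrow> 'a \<Rightarrow> bool) \<Rightarrow> 'a \<Rightarrow> 'a set" where
  "closed_nbhd V E v = insert v (open_nbhd V E v)"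

definition del_vertex :: "'a set \<Rightarrow> 'a \<Rightarrow> 'a set" where
  "del_vertex V w = V - {w}"

definition false_twins :: "'a set \<Rightarrow> ('a \<Rightarrow> 'a \<Rightarrow> bool) \<Rightarrow> 'a \<Rightarrow> 'a \<Rightarrow> bool" where
  "false_twins V E v v' \<longleftrightarrow> v \<in> V \<and> v' \<in> V \<and> open_nbhd V E v = open_nbhd V E v'"

definition is_DNS :: "'a set \<Rightarrow> ('a \<Rightarrow> 'a \<Rightarrow> bool) \<Rightarrow> 'a list \<Rightarrow> bool" where
  "is_DNS V E S \<longleftrightarrow> distinct S \<and> set S \<subseteq> V \<and>
     (\<forall>i < length S. \<exists>u \<in> closed_nbhd V E (S ! i).
        card {j. j < i \<and> u \<in> closed_nbhd V E (S ! j)} \<le> 1)"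

definition gamma_gr2 :: "'a set \<Rightarrow> ('a \<Rightarrow> 'a \<Rightarrow> bool) \<Rightarrow> nat" where
  "gamma_gr2 V E = Max {length S | S. is_DNS V E S}"

definition is_MDNS :: "'a set \<Rightarrow> ('a \<Rightarrow> 'a \<Rightarrow> bool) \<Rightarrow> 'a list \<Rightarrow> bool" where
  "is_MDNS V E S \<longleftrightarrow> is_DNS V E S \<and> length S = gamma_gr2 V E"

end

theory Submission
  imports Defs "HOL-Combinatorics.Transposition"
begin

text \<open>A DNS of \<open>G - v'\<close> is one of \<open>G\<close>: its witnesses lie in \<open>G - v'\<close>, and whether such a
  vertex lies in a closed neighbourhood does not depend on the presence of \<open>v'\<close>.
  Conversely, the transposition of the false twins \<open>v\<close>, \<open>v'\<close> is an automorphism of \<open>G\<close>,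
  so a maximum DNS of \<open>G\<close> may be assumed to list \<open>v'\<close> before \<open>v\<close>. Deleting \<open>v'\<close> from it
  then leaves a DNS of \<open>G - v'\<close>: wherever \<open>v'\<close> served as the witness, its twin \<open>v\<close> serves
  instead, and the earlier occurrence of \<open>v'\<close> pays for the one extra count that \<open>v\<close> itself may
  contribute. An MDNS avoiding both twins is unchanged by the deletion, hence is a DNS of
  \<open>G - v'\<close> of length \<open>\<gamma>(G)\<close>.\<close>

lemma removeAll_eq_append_ConsD:
  "removeAll w S = xs' @ x # ys' \<Longrightarrow> \<exists>xs ys. S = xs @ x # ys \<and> removeAll w xs = xs'"
proof (induction S arbitrary: xs')
  case (Cons a S)
  consider "a = w" | "a \<noteq> w" "xs' = []"
    | xs'' where "a \<noteq> w" "xs' = a # xs''" "removeAll w S = xs'' @ x # ys'"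
    using Cons.prems by (cases "a = w"; cases xs') auto
  then show ?case
  proof cases
    case 1
    then show ?thesis
      using Cons by (metis append_Cons removeAll.simps(2))
  next
    case 2
    then show ?thesis
      using Cons.prems by (intro exI[of _ "[]"] exI[of _ S]) auto
  next
    case 3
    then show ?thesis
      using Cons.IH by (metis append_Cons removeAll.simps(2))
  qed
qed simp

lemma length_le_length_removeAll_Suc:
  "distinct S \<Longrightarrow> length S \<le> Suc (length (removeAll w S))"
  by (cases "w \<in> set S") (auto simp: distinct_remove1_removeAll[symmetric] length_remove1)

definition precedes :: "'a list \<Rightarrow> 'a \<Rightarrow> 'a \<Rightarrow> bool" where
  "precedes S a b \<longleftrightarrow> (\<forall>xs ys. S = xs @ b # ys \<longrightarrow> a \<in> set xs)"

lemma precedes_if_notin: "b \<notin> set S \<Longrightarrow> precedes S a b"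
  by (auto simp: precedes_def)

lemma precedes_Cons_iff:
  assumes "c \<noteq> b"
  shows "precedes (c # S) a b \<longleftrightarrow> c = a \<or> precedes S a b"
proof
  assume "precedes (c # S) a b"
  then have "a \<in> set (c # xs)" if "S = xs @ b # ys" for xs ys
    using that unfolding precedes_def by (metis append_Cons)
  then show "c = a \<or> precedes S a b"
    unfolding precedes_def by auto
next
  assume "c = a \<or> precedes S a b"
  then show "precedes (c # S) a b"
    using assms unfolding precedes_def by (auto simp: Cons_eq_append_conv)
qed

lemma precedes_total: "a \<noteq> b \<Longrightarrow> precedes S a b \<or> precedes S b a"
proof (induction S)
  case (Cons c S)
  then show ?case
    by (cases "c = a"; cases "c = b") (auto simp: precedes_Cons_iff)
qed (simp add: precedes_if_notin)

lemma precedes_append: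
  "precedes (xs @ ys) a b \<Longrightarrow> b \<in> set xs \<Longrightarrow> a \<in> set xs"
  by (fastforce simp: precedes_def in_set_conv_decomp)

lemma precedes_map:
  assumes "inj f" "precedes S a b"
  shows "precedes (map f S) (f a) (f b)"
  unfolding precedes_def
proof (intro allI impI)
  fix xs' ys'
  assume "map f S = xs' @ f b # ys'"
  then obtain xs b' ys where "S = xs @ b' # ys" "xs' = map f xs" "f b' = f b"
    by (auto simp: map_eq_append_conv)
  then show "f a \<in> set xs'"
    using assms unfolding precedes_def by (auto simp: inj_eq)
qed

lemma card_take_eq_card_indices:
  assumes "distinct S" "i \<le> length S"
  shows "card {y \<in> set (take i S). P y} = card {j. j < i \<and> P (S ! j)}"
proof -
  have "{y \<in> set (take i S). P y} = (!) S ` {j. j < i \<and> P (S ! j)}"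
    unfolding nth_image[OF assms(2), symmetric] by auto
  moreover have "inj_on ((!) S) {j. j < i \<and> P (S ! j)}"
    using assms by (intro inj_on_nth) auto
  ultimately show ?thesis
    by (simp add: card_image)
qed

lemma mem_closed_nbhd_iff_of_subset:
  assumes "u \<in> W" "W \<subseteq> V"
  shows "u \<in> closed_nbhd W E y \<longleftrightarrow> u \<in> closed_nbhd V E y"
  using assms by (auto simp: closed_nbhd_def open_nbhd_def)

lemma closed_nbhd_subset:
  "x \<in> V \<Longrightarrow> closed_nbhd V E x \<subseteq> V"
  by (auto simp: closed_nbhd_def open_nbhd_def)

lemma false_twins_adj_iff:
  assumes "simple_graph V E" "false_twins V E v v'"
  shows "E y v \<longleftrightarrow> E y v'"
  using assms unfolding simple_graph_def false_twins_def open_nbhd_def by blast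

lemma false_twins_transpose_adj_iff:
  assumes "simple_graph V E" "false_twins V E v v'"
  shows "E (transpose v v' x) (transpose v v' y) \<longleftrightarrow> E x y"
proof -
  have twin: "E a v \<longleftrightarrow> E a v'" for a
    using false_twins_adj_iff[OF assms] .
  have sym: "E a b \<Longrightarrow> E b a" for a b
    using assms(1) unfolding simple_graph_def by blast
  have twin': "E v a \<longleftrightarrow> E v' a" for a
    using twin[of a] sym[of v a] sym[of a v'] sym[of v' a] sym[of a v] by blast
  show ?thesis
    unfolding transpose_def by (smt (verit) twin twin')
qed

lemma is_DNS_distinct: "is_DNS V E S \<Longrightarrow> distinct S"
  by (simp add: is_DNS_def)

lemma is_DNS_subset: "is_DNS V E S \<Longrightarrow> set S \<subseteq> V"
  by (simp add: is_DNS_def)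

lemma is_DNS_iff_prefixes:
  "is_DNS V E S \<longleftrightarrow> distinct S \<and> set S \<subseteq> V \<and>
    (\<forall>xs x ys. S = xs @ x # ys \<longrightarrow>
      (\<exists>u \<in> closed_nbhd V E x. card {y \<in> set xs. u \<in> closed_nbhd V E y} \<le> 1))"
  (is "_ \<longleftrightarrow> _ \<and> _ \<and> ?prefixes")
proof (cases "distinct S")
  case True
  have "(\<forall>i < length S. \<exists>u \<in> closed_nbhd V E (S ! i).
          card {j. j < i \<and> u \<in> closed_nbhd V E (S ! j)} \<le> 1) \<longleftrightarrow> ?prefixes"
  proof
    assume indices: "\<forall>i < length S. \<exists>u \<in> closed_nbhd V E (S ! i).
          card {j. j < i \<and> u \<in> closed_nbhd V E (S ! j)} \<le> 1"
    show ?prefixes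
    proof (intro allI impI)
      fix xs x ys
      assume "S = xs @ x # ys"
      then have "length xs < length S" "S ! length xs = x" "take (length xs) S = xs"
        by auto
      then show "\<exists>u \<in> closed_nbhd V E x. card {y \<in> set xs. u \<in> closed_nbhd V E y} \<le> 1"
        using indices card_take_eq_card_indices[OF True, of "length xs"] by fastforce
    qed
  next
    assume ?prefixes
    show "\<forall>i < length S. \<exists>u \<in> closed_nbhd V E (S ! i).
          card {j. j < i \<and> u \<in> closed_nbhd V E (S ! j)} \<le> 1"
    proof (intro allI impI)
      fix i
      assume "i < length S"
      then have "S = take i S @ S ! i # drop (Suc i) S"
        by (simp add: id_take_nth_drop)
      then show "\<exists>u \<in> closed_nbhd V E (S ! i).
          card {j. j < i \<and> u \<in> closed_nbhd V E (S ! j)} \<le> 1"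
        using \<open>?prefixes\<close> \<open>i < length S\<close> card_take_eq_card_indices[OF True, of i]
        by fastforce
    qed
  qed
  then show ?thesis
    unfolding is_DNS_def by blast
qed (simp add: is_DNS_def)

lemma is_DNS_mono:
  assumes "W \<subseteq> V" "is_DNS W E S"
  shows "is_DNS V E S"
  unfolding is_DNS_def
proof (intro conjI allI impI)
  show "distinct S" "set S \<subseteq> V"
    using assms by (auto dest: is_DNS_distinct is_DNS_subset)
  fix i
  assume i: "i < length S"
  then obtain u where u: "u \<in> closed_nbhd W E (S ! i)"
    "card {j. j < i \<and> u \<in> closed_nbhd W E (S ! j)} \<le> 1"
    using assms(2) unfolding is_DNS_def by blast
  have "S ! i \<in> W"
    using is_DNS_subset[OF assms(2)] i by (meson nth_mem subsetD)
  then have "u \<in> W"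
    using u(1) by (rule subsetD[OF closed_nbhd_subset])
  then have "u \<in> closed_nbhd V E (S ! i)"
    and "{j. j < i \<and> u \<in> closed_nbhd V E (S ! j)} = {j. j < i \<and> u \<in> closed_nbhd W E (S ! j)}"
    using u(1) mem_closed_nbhd_iff_of_subset[OF _ assms(1)] by blast+
  with u(2) show "\<exists>u \<in> closed_nbhd V E (S ! i).
      card {j. j < i \<and> u \<in> closed_nbhd V E (S ! j)} \<le> 1"
    by metis
qed

lemma is_DNS_map_automorphism:
  assumes "inj f" "\<And>x. f x \<in> V \<longleftrightarrow> x \<in> V" "\<And>x y. E (f x) (f y) \<longleftrightarrow> E x y"
    and "is_DNS V E S"
  shows "is_DNS V E (map f S)"
  unfolding is_DNS_def
proof (intro conjI allI impI)
  have nbhd: "f u \<in> closed_nbhd V E (f y) \<longleftrightarrow> u \<in> closed_nbhd V E y" for u y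
    using assms(1-3) by (auto simp: closed_nbhd_def open_nbhd_def inj_eq)
  show "distinct (map f S)" "set (map f S) \<subseteq> V"
    using assms(1,2) is_DNS_distinct[OF assms(4)] is_DNS_subset[OF assms(4)]
    by (auto simp: distinct_map inj_on_subset)
  fix i
  assume i: "i < length (map f S)"
  then obtain u where "u \<in> closed_nbhd V E (S ! i)"
    "card {j. j < i \<and> u \<in> closed_nbhd V E (S ! j)} \<le> 1"
    using assms(4) unfolding is_DNS_def by auto
  moreover have "{j. j < i \<and> f u \<in> closed_nbhd V E (map f S ! j)}
      = {j. j < i \<and> u \<in> closed_nbhd V E (S ! j)}"
    using i nbhd by auto
  ultimately show "\<exists>u \<in> closed_nbhd V E (map f S ! i).
      card {j. j < i \<and> u \<in> closed_nbhd V E (map f S ! j)} \<le> 1"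
    using i nbhd by (intro bexI[of _ "f u"]) auto
qed

lemma is_DNS_removeAll_false_twin:
  assumes G: "simple_graph V E" and twins: "false_twins V E v v'" and "v \<noteq> v'"
    and S: "is_DNS V E S" and first: "precedes S v' v"
  shows "is_DNS (V - {v'}) E (removeAll v' S)"
  unfolding is_DNS_iff_prefixes
proof (intro conjI allI impI)
  show "distinct (removeAll v' S)" "set (removeAll v' S) \<subseteq> V - {v'}"
    using is_DNS_distinct[OF S] is_DNS_subset[OF S] by (auto simp: distinct_removeAll)
  fix xs' x ys'
  assume split: "removeAll v' S = xs' @ x # ys'"
  then obtain xs ys where Sx: "S = xs @ x # ys" and xs': "xs' = removeAll v' xs"
    using removeAll_eq_append_ConsD by metis
  have "x \<in> set (removeAll v' S)"
    unfolding split by simp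
  then have "x \<noteq> v'"
    by simp
  have "x \<in> V"
    using is_DNS_subset[OF S] Sx by auto
  obtain u where u: "u \<in> closed_nbhd V E x" "card {y \<in> set xs. u \<in> closed_nbhd V E y} \<le> 1"
    using S Sx unfolding is_DNS_iff_prefixes by blast
  have "u \<in> V"
    using u(1) closed_nbhd_subset[OF \<open>x \<in> V\<close>] by blast
  show "\<exists>u \<in> closed_nbhd (V - {v'}) E x.
      card {y \<in> set xs'. u \<in> closed_nbhd (V - {v'}) E y} \<le> 1"
  proof (cases "u = v'")
    case False
    then have "u \<in> V - {v'}"
      using \<open>u \<in> V\<close> by blast
    then have nbhd: "u \<in> closed_nbhd (V - {v'}) E y \<longleftrightarrow> u \<in> closed_nbhd V E y" for y
      by (rule mem_closed_nbhd_iff_of_subset) blast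
    then have "u \<in> closed_nbhd (V - {v'}) E x"
      using u(1) by blast
    moreover have "{y \<in> set xs'. u \<in> closed_nbhd (V - {v'}) E y}
        \<subseteq> {y \<in> set xs. u \<in> closed_nbhd V E y}"
      using nbhd xs' by auto
    then have "card {y \<in> set xs'. u \<in> closed_nbhd (V - {v'}) E y}
        \<le> card {y \<in> set xs. u \<in> closed_nbhd V E y}"
      by (rule card_mono[rotated]) simp
    ultimately show ?thesis
      using u(2) by (intro bexI[of _ u]) auto
  next
    case True
    text \<open>The twin \<open>v\<close> takes over as witness; since \<open>v'\<close> precedes \<open>v\<close>, the transposition
      maps the prefix vertices dominating \<open>v\<close> into those that dominated \<open>v'\<close>.\<close>
    have v: "v \<in> V - {v'}"
      using twins \<open>v \<noteq> v'\<close> by (auto simp: false_twins_def)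
    have "E x v"
      using True u(1) \<open>x \<noteq> v'\<close> false_twins_adj_iff[OF G twins]
      by (auto simp: closed_nbhd_def open_nbhd_def)
    then have "v \<in> closed_nbhd (V - {v'}) E x"
      using v by (auto simp: closed_nbhd_def open_nbhd_def)
    have "{y \<in> set xs'. v \<in> closed_nbhd (V - {v'}) E y}
        \<subseteq> transpose v v' ` {y \<in> set xs. v' \<in> closed_nbhd V E y}"
    proof
      fix y
      assume y: "y \<in> {y \<in> set xs'. v \<in> closed_nbhd (V - {v'}) E y}"
      show "y \<in> transpose v v' ` {y \<in> set xs. v' \<in> closed_nbhd V E y}"
      proof (cases "y = v")
        case True
        then have "v' \<in> set xs"
          using y xs' first Sx precedes_append[of xs "x # ys" v' v] by auto
        then show ?thesis
          using True by (intro image_eqI[of _ _ v']) (auto simp: closed_nbhd_def)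
      next
        case False
        have "y \<in> set xs" "y \<noteq> v'" "v \<in> closed_nbhd (V - {v'}) E y"
          using y xs' by auto
        then have "E y v'"
          using False false_twins_adj_iff[OF G twins] by (simp add: closed_nbhd_def open_nbhd_def)
        then have "v' \<in> closed_nbhd V E y"
          using twins by (simp add: closed_nbhd_def open_nbhd_def false_twins_def)
        then show ?thesis
          using \<open>y \<in> set xs\<close> \<open>y \<noteq> v'\<close> False by (intro image_eqI[of _ _ y]) auto
      qed
    qed
    then have "card {y \<in> set xs'. v \<in> closed_nbhd (V - {v'}) E y}
        \<le> card (transpose v v' ` {y \<in> set xs. v' \<in> closed_nbhd V E y})"
      by (rule card_mono[rotated]) simp
    also have "\<dots> \<le> card {y \<in> set xs. v' \<in> closed_nbhd V E y}"
      by (rule card_image_le) simp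
    also have "\<dots> \<le> 1"
      using u(2) True by simp
    finally show ?thesis
      using \<open>v \<in> closed_nbhd (V - {v'}) E x\<close> by blast
  qed
qed

lemma false_twins_reorder_DNS:
  assumes "simple_graph V E" "false_twins V E v v'" "v \<noteq> v'" "is_DNS V E S"
  obtains S' where "is_DNS V E S'" "length S' = length S" "precedes S' v' v"
proof (cases "precedes S v' v")
  case False
  then have "precedes S v v'"
    using precedes_total assms(3) by metis
  then have "precedes (map (transpose v v') S) v' v"
    using precedes_map[OF inj_transpose, of S v v' v v'] by simp
  moreover have "is_DNS V E (map (transpose v v') S)"
  proof (rule is_DNS_map_automorphism[OF inj_transpose _ _ assms(4)])
    show "transpose v v' x \<in> V \<longleftrightarrow> x \<in> V" for x
      using assms(2) by (auto simp: false_twins_def transpose_def)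
    show "E (transpose v v' x) (transpose v v' y) \<longleftrightarrow> E x y" for x y
      by (rule false_twins_transpose_adj_iff[OF assms(1,2)])
  qed
  ultimately show ?thesis
    using that by simp
qed (use that assms(4) in blast)

lemma finite_DNS_lengths:
  assumes "finite V"
  shows "finite {length S | S. is_DNS V E S}"
proof (rule finite_subset)
  have "length S \<le> card V" if "is_DNS V E S" for S
    using distinct_card[OF is_DNS_distinct[OF that]] card_mono[OF assms is_DNS_subset[OF that]]
    by simp
  then show "{length S | S. is_DNS V E S} \<subseteq> {..card V}"
    by auto
qed simp

lemma length_le_gamma_gr2:
  "finite V \<Longrightarrow> is_DNS V E S \<Longrightarrow> length S \<le> gamma_gr2 V E"
  unfolding gamma_gr2_def by (rule Max_ge[OF finite_DNS_lengths]) auto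

lemma ex_MDNS:
  assumes "finite V"
  obtains S where "is_MDNS V E S"
proof -
  have "is_DNS V E []"
    by (simp add: is_DNS_def)
  then have "gamma_gr2 V E \<in> {length S | S. is_DNS V E S}"
    unfolding gamma_gr2_def by (intro Max_in[OF finite_DNS_lengths[OF assms]]) auto
  then show ?thesis
    using that by (auto simp: is_MDNS_def)
qed

lemma gamma_gr2_mono:
  assumes "finite V" "W \<subseteq> V"
  shows "gamma_gr2 W E \<le> gamma_gr2 V E"
proof -
  obtain S where "is_MDNS W E S"
    using ex_MDNS[OF finite_subset[OF assms(2,1)]] .
  then have "is_DNS V E S" "length S = gamma_gr2 W E"
    using is_DNS_mono[OF assms(2)] by (auto simp: is_MDNS_def)
  then show ?thesis
    using length_le_gamma_gr2[OF assms(1)] by metis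
qed

lemma gamma_gr2_le_delete_false_twin:
  assumes "simple_graph V E" "false_twins V E v v'" "v \<noteq> v'"
  shows "gamma_gr2 V E \<le> gamma_gr2 (V - {v'}) E + 1"
proof -
  have "finite V"
    using assms(1) by (simp add: simple_graph_def)
  then obtain S where "is_MDNS V E S"
    by (rule ex_MDNS)
  then obtain S' where S': "is_DNS V E S'" "length S' = gamma_gr2 V E" "precedes S' v' v"
    using false_twins_reorder_DNS[OF assms] by (metis is_MDNS_def)
  have "gamma_gr2 V E \<le> Suc (length (removeAll v' S'))"
    using S' length_le_length_removeAll_Suc is_DNS_distinct by metis
  also have "length (removeAll v' S') \<le> gamma_gr2 (V - {v'}) E"
    using is_DNS_removeAll_false_twin[OF assms S'(1,3)] \<open>finite V\<close>
    by (simp add: length_le_gamma_gr2)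
  finally show ?thesis
    by simp
qed

lemma MDNS_meets_false_twins:
  assumes "simple_graph V E" "false_twins V E v v'" "v \<noteq> v'"
    and "is_MDNS V E S" "gamma_gr2 V E = gamma_gr2 (V - {v'}) E + 1"
  shows "v \<in> set S \<or> v' \<in> set S"
proof (rule ccontr)
  assume "\<not> (v \<in> set S \<or> v' \<in> set S)"
  then have "is_DNS (V - {v'}) E S"
    using is_DNS_removeAll_false_twin[OF assms(1-3), of S] assms(4)
    by (simp add: is_MDNS_def precedes_if_notin)
  then have "length S \<le> gamma_gr2 (V - {v'}) E"
    using assms(1) by (simp add: length_le_gamma_gr2 simple_graph_def)
  then show False
    using assms(4,5) by (simp add: is_MDNS_def)
qed

theorem proposition7:
  fixes V :: "'a set" and E :: "'a \<Rightarrow> 'a \<Rightarrow> bool" and v v' :: 'a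
  assumes "simple_graph V E"
    and "v \<noteq> v'"
    and "false_twins V E v v'"
  shows "gamma_gr2 (del_vertex V v') E \<le> gamma_gr2 V E
    \<and> gamma_gr2 V E \<le> gamma_gr2 (del_vertex V v') E + 1
    \<and> (\<forall>S. is_MDNS V E S \<and> gamma_gr2 V E = gamma_gr2 (del_vertex V v') E + 1
           \<longrightarrow> v \<in> set S \<or> v' \<in> set S)"
  unfolding del_vertex_def
proof (intro conjI allI impI)
  show "gamma_gr2 (V - {v'}) E \<le> gamma_gr2 V E"
    using assms(1) by (intro gamma_gr2_mono) (auto simp: simple_graph_def)
  show "gamma_gr2 V E \<le> gamma_gr2 (V - {v'}) E + 1"
    using gamma_gr2_le_delete_false_twin[OF assms(1,3,2)] .
  show "v \<in> set S \<or> v' \<in> set S"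
    if "is_MDNS V E S \<and> gamma_gr2 V E = gamma_gr2 (V - {v'}) E + 1" for S
    using MDNS_meets_false_twins[OF assms(1,3,2)] that by blast
qed

end
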